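(* Let $A_0\in\mathbb{R}^{n\times n}$, $B\in\mathbb{R}^{n\times1}$, $K\in\mathbb{R}^{1\times n}$, and let $P_0\succeq0$ be symmetric with $A_0^\top P_0+P_0A_0\preceq0$, $\ker P_0\subseteq\ker A_0$, and $P_0$ not of full rank. If $h,\mu\in\mathbb{R}$ satisfy $P_0B-hA_0^\top K^\top=\mu K^\top$ and $P_0+hK^\top K\succ0$, then $\mu=0$. *)

theory Defs
  imports "HOL-Analysis.Analysis"
begin

definition sym_mat :: "real^'n^'n \<Rightarrow> bool" where
  "sym_mat M \<longleftrightarrow> transpose M = M"

definition psd :: "real^'n^'n \<Rightarrow> bool" where
  "psd M \<longleftrightarrow> (\<forall>x. x \<bullet> (M *v x) \<ge> 0)"

definition nsd :: "real^'n^'n \<Rightarrow> bool" where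
  "nsd M \<longleftrightarrow> (\<forall>x. x \<bullet> (M *v x) \<le> 0)"

definition pd :: "real^'n^'n \<Rightarrow> bool" where
  "pd M \<longleftrightarrow> (\<forall>x. x \<noteq> 0 \<longrightarrow> x \<bullet> (M *v x) > 0)"

end

theory Submission
  imports Defs
begin

text \<open>
  Since \<open>P0\<close> is singular, pick \<open>v \<noteq> 0\<close> with \<open>P0 v = 0\<close>; then also \<open>A0 v = 0\<close>.
  Multiplying the constraint on \<open>B\<close> from the left by \<open>v\<^sup>T\<close> kills both terms on the left,
  since \<open>v\<^sup>T P0 = (P0 v)\<^sup>T\<close> and \<open>v\<^sup>T A0\<^sup>T = (A0 v)\<^sup>T\<close>, leaving \<open>\<mu> K v = 0\<close>.
  On the other hand \<open>v\<^sup>T (P0 + h K\<^sup>T K) v = h \<bar>K v\<bar>\<^sup>2 > 0\<close>, so \<open>K v \<noteq> 0\<close> and hence \<open>\<mu> = 0\<close>.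
\<close>

lemma quadratic_form_transpose_mult_self:
  fixes K :: "real^'n^'m"
  shows "x \<bullet> ((transpose K ** K) *v x) = (K *v x) \<bullet> (K *v x)"
proof -
  have "(transpose K ** K) *v x = (K *v x) v* K"
    by (simp flip: matrix_vector_mul_assoc)
  then show ?thesis
    by (metis dot_lmul_matrix inner_commute)
qed

lemma pd_add_scaled_gram_imp_nonzero_on_kernel:
  fixes P :: "real^'n^'n" and K :: "real^'n^'m"
  assumes "pd (P + h *\<^sub>R (transpose K ** K))" and "P *v v = 0" and "v \<noteq> 0"
  shows "K *v v \<noteq> 0"
proof
  assume "K *v v = 0"
  then have "v \<bullet> ((P + h *\<^sub>R (transpose K ** K)) *v v) = 0"
    using assms(2)
    by (simp add: matrix_vector_mult_add_rdistrib quadratic_form_transpose_mult_self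
        inner_add_right flip: scaleR_matrix_vector_assoc)
  with assms(1,3) show False
    unfolding pd_def by fastforce
qed

theorem mainTheorem6:
  fixes A0 P0 :: "real^'n^'n" and B :: "real^1^'n" and K :: "real^'n^1"
    and h \<mu> :: real
  assumes "sym_mat P0" and "psd P0"
    and "nsd (transpose A0 ** P0 + P0 ** A0)"
    and "\<forall>x. P0 *v x = 0 \<longrightarrow> A0 *v x = 0"
    and "rank P0 < CARD('n)"
    and "P0 ** B - h *\<^sub>R (transpose A0 ** transpose K) = \<mu> *\<^sub>R transpose K"
    and "pd (P0 + h *\<^sub>R (transpose K ** K))"
  shows "\<mu> = 0"
proof -
  obtain v where "v \<noteq> 0" and P0v: "P0 *v v = 0"
    using matrix_nonfull_linear_equations_eq[of P0] assms(5) by auto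
  have A0v: "A0 *v v = 0"
    using assms(4) P0v by blast
  have vP0: "v v* P0 = 0"
    using assms(1) P0v by (metis sym_mat_def vector_transpose_matrix)
  have "v v* (P0 ** B - h *\<^sub>R (transpose A0 ** transpose K)) = 0"
    by (simp add: vector_matrix_mult_diff_rdistrib vector_scaleR_matrix_ac
        vP0 A0v flip: vector_matrix_mul_assoc)
  then have "\<mu> *\<^sub>R (K *v v) = 0"
    by (simp add: assms(6) vector_scaleR_matrix_ac)
  moreover have "K *v v \<noteq> 0"
    using pd_add_scaled_gram_imp_nonzero_on_kernel assms(7) P0v \<open>v \<noteq> 0\<close> .
  ultimately show ?thesis
    by simp
qed

end
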